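(* For every nonnegative integer $d$ and every $\tau\ge1$, $$\int_0^\infty\left(\int_\tau^x\frac{|H_d(t)|}{t}\,dt\right)\varphi(x)\,dx\le e^{-\tau^2/4}.$$
   Context: $\varphi(x)=\frac{1}{\sqrt{2\pi}}e^{-x^2/2}$ is the standard Gaussian density on $\mathbb{R}$. The Hermite polynomials $(H_k)_{k\ge0}$ are the orthonormal polynomials for $\mathcal{N}(0,1)$ with $\deg H_k=k$ and positive leading coefficient (the probabilist's Hermite polynomials divided by $\sqrt{k!}$). For $x<\tau$ the inner integral $\int_\tau^x$ is the usual oriented integral. *)

theory Defs
  imports "HOL-Probability.Probability"
begin

text \<open>Probabilist's Hermite polynomials He_n (monic), via the three-term recurrence
  He_0 = 1, He_1 = x, He_(n+2) = x He_(n+1) - (n+1) He_n.\<close>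
fun hermite_prob :: "nat \<Rightarrow> real \<Rightarrow> real" where
  "hermite_prob 0 x = 1"
| "hermite_prob (Suc 0) x = x"
| "hermite_prob (Suc (Suc n)) x = x * hermite_prob (Suc n) x - real (Suc n) * hermite_prob n x"

text \<open>Orthonormal Hermite polynomials for N(0,1): H_k = He_k / sqrt(k!).\<close>
definition hermite :: "nat \<Rightarrow> real \<Rightarrow> real" where
  "hermite k x = hermite_prob k x / sqrt (fact k)"

end

(*
  The inner integral is nonpositive for x < tau, so the outer integral is at most its
  part over x > tau.  By Tonelli that part is the integral over t > tau of
  |H_d(t)| / t * P(X > t), and Mills' ratio P(X > t) <= phi(t) / t bounds it by the
  integral of |H_d| phi / t^2.  Weighted AM-GM with weight l = exp(-tau^2/4) gives
  |H_d| / t^2 <= (l/2) H_d^2 + 1 / (2 l t^4) <= (l/2) H_d^2 + t / (2 l) for t >= 1, and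
  the two pieces contribute (l/2) E[H_d(X)^2] = l/2 and phi(tau) / (2 l) <= l/2.
  The part over 0 < x < tau is finite because H_d is continuous, so the integral
  exists.  Orthonormality E[He_n(X)^2] = n! comes from Stein's identity
  E[X p(X)] = E[p'(X)] together with He_(n+1) = x He_n - He_n'.
*)
theory Submission
  imports Defs "HOL-Computational_Algebra.Polynomial" "HOL-Real_Asymp.Real_Asymp"
begin

lemma std_normal_moment_Suc_Suc:
  "(\<integral>x. std_normal_density x * x ^ Suc (Suc k) \<partial>lborel)
     = real (Suc k) * (\<integral>x. std_normal_density x * x ^ k \<partial>lborel)"
proof (cases "even k")
  case True
  then obtain j where k: "k = 2 * j" by auto
  have "(fact (2 * Suc j) :: real) = 2 * real (Suc j) * (real (Suc (2 * j)) * fact (2 * j))"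
    by (simp add: numeral_2_eq_2 algebra_simps)
  moreover have "(2::real) ^ Suc j * fact (Suc j) = 2 * real (Suc j) * (2 ^ j * fact j)"
    by simp
  ultimately have "fact (2 * Suc j) / (2 ^ Suc j * fact (Suc j))
      = real (Suc (2 * j)) * (fact (2 * j) / (2 ^ j * fact j) :: real)"
    by (simp only: mult_divide_mult_cancel_left_if) simp
  moreover have "Suc (Suc k) = 2 * Suc j" using k by simp
  ultimately show ?thesis
    unfolding k by (simp only: integral_std_normal_moment_even)
next
  case False
  then obtain j where k: "k = 2 * j + 1" by (auto elim: oddE)
  have "Suc (Suc k) = 2 * Suc j + 1" using k by simp
  then show ?thesis
    unfolding k by (simp only: integral_std_normal_moment_odd)
qed

definition gaussian_expectation :: "real poly \<Rightarrow> real" where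
  "gaussian_expectation p = (\<integral>x. std_normal_density x * poly p x \<partial>lborel)"

lemma integrable_std_normal_poly:
  "integrable lborel (\<lambda>x. std_normal_density x * poly p x)"
proof -
  have "std_normal_density x * poly p x = (\<Sum>i\<le>degree p. coeff p i * (std_normal_density x * x ^ i))" for x
    by (simp add: poly_altdef sum_distrib_left mult.left_commute)
  then show ?thesis
    by (simp add: integrable_sum integrable_std_normal_moment)
qed

lemma gaussian_expectation_0 [simp]: "gaussian_expectation 0 = 0"
  by (simp add: gaussian_expectation_def)

lemma gaussian_expectation_add:
  "gaussian_expectation (p + q) = gaussian_expectation p + gaussian_expectation q"
  unfolding gaussian_expectation_def
  by (simp add: distrib_left integrable_std_normal_poly)

lemma gaussian_expectation_diff:
  "gaussian_expectation (p - q) = gaussian_expectation p - gaussian_expectation q"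
  unfolding gaussian_expectation_def
  by (simp add: right_diff_distrib integrable_std_normal_poly)

lemma gaussian_expectation_smult:
  "gaussian_expectation (smult c p) = c * gaussian_expectation p"
  unfolding gaussian_expectation_def by (simp add: mult.left_commute)

lemma gaussian_expectation_sum:
  "gaussian_expectation (\<Sum>i\<in>A. p i) = (\<Sum>i\<in>A. gaussian_expectation (p i))"
  unfolding gaussian_expectation_def
  by (simp add: poly_sum sum_distrib_left integrable_std_normal_poly)

lemma gaussian_expectation_monom:
  "gaussian_expectation (monom c k) = c * (\<integral>x. std_normal_density x * x ^ k \<partial>lborel)"
  unfolding gaussian_expectation_def poly_monom by (simp add: mult.left_commute)

lemma gaussian_expectation_stein:
  "gaussian_expectation ([:0, 1:] * p) = gaussian_expectation (pderiv p)"
proof -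
  have monom: "gaussian_expectation ([:0, 1:] * monom c k) = gaussian_expectation (pderiv (monom c k))"
    for c k
  proof -
    have "[:0, 1:] * monom c k = monom c (Suc k)"
      by (simp add: monom_Suc)
    then show ?thesis
      using integral_std_normal_moment_odd[of 0] std_normal_moment_Suc_Suc[of "k - 1"]
      by (cases k) (simp_all add: gaussian_expectation_monom pderiv_monom)
  qed
  have "gaussian_expectation ([:0, 1:] * p)
      = (\<Sum>i\<le>degree p. gaussian_expectation ([:0, 1:] * monom (coeff p i) i))"
    by (subst poly_as_sum_of_monoms[symmetric]) (simp only: sum_distrib_left gaussian_expectation_sum)
  also have "\<dots> = (\<Sum>i\<le>degree p. gaussian_expectation (pderiv (monom (coeff p i) i)))"
    by (simp only: monom)
  also have "\<dots> = gaussian_expectation (pderiv p)"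
    using higher_pderiv_sum[of 1 "\<lambda>i. monom (coeff p i) i" "{..degree p}"]
    by (simp add: poly_as_sum_of_monoms gaussian_expectation_sum)
  finally show ?thesis .
qed

fun hermite_poly :: "nat \<Rightarrow> real poly" where
  "hermite_poly 0 = 1"
| "hermite_poly (Suc 0) = [:0, 1:]"
| "hermite_poly (Suc (Suc n)) = [:0, 1:] * hermite_poly (Suc n) - smult (real (Suc n)) (hermite_poly n)"

lemma poly_hermite_poly: "poly (hermite_poly n) x = hermite_prob n x"
  by (induction n rule: hermite_poly.induct) auto

lemma pderiv_hermite_poly: "pderiv (hermite_poly (Suc n)) = smult (real (Suc n)) (hermite_poly n)"
proof (induction n rule: hermite_poly.induct)
  case 1
  then show ?case by (simp add: pderiv_pCons)
next
  case 2
  then show ?case by (simp add: pderiv_pCons pderiv_mult pderiv_diff)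
next
  case (3 n)
  let ?H = hermite_poly and ?x = "[:0, 1:] :: real poly"
  have "pderiv (?H (Suc (Suc (Suc n))))
      = ?H (Suc (Suc n)) + ?x * pderiv (?H (Suc (Suc n))) - smult (real (Suc (Suc n))) (pderiv (?H (Suc n)))"
    by (simp only: hermite_poly.simps(3)) (simp add: pderiv_mult pderiv_diff pderiv_smult pderiv_pCons)
  also have "\<dots> = ?H (Suc (Suc n)) + smult (real (Suc (Suc n))) (?x * ?H (Suc n) - smult (real (Suc n)) (?H n))"
    using "3.IH" by (simp del: hermite_poly.simps add: smult_diff_right)
  also have "\<dots> = ?H (Suc (Suc n)) + smult (real (Suc (Suc n))) (?H (Suc (Suc n)))"
    by (simp only: hermite_poly.simps(3))
  also have "\<dots> = smult (real (Suc (Suc (Suc n)))) (?H (Suc (Suc n)))"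
    by (simp only: of_nat_Suc[of "Suc (Suc n)"] smult_add_left smult_1_left)
  finally show ?case .
qed

lemma hermite_poly_Suc:
  "hermite_poly (Suc n) = [:0, 1:] * hermite_poly n - pderiv (hermite_poly n)"
  by (cases n) (simp_all add: pderiv_hermite_poly)

lemma gaussian_expectation_mult_hermite_poly_Suc:
  "gaussian_expectation (q * hermite_poly (Suc n)) = gaussian_expectation (pderiv q * hermite_poly n)"
proof -
  have "q * hermite_poly (Suc n) = [:0, 1:] * (q * hermite_poly n) - q * pderiv (hermite_poly n)"
    by (simp del: hermite_poly.simps add: hermite_poly_Suc algebra_simps)
  then have "gaussian_expectation (q * hermite_poly (Suc n))
      = gaussian_expectation (pderiv (q * hermite_poly n)) - gaussian_expectation (q * pderiv (hermite_poly n))"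
    by (simp only: gaussian_expectation_diff gaussian_expectation_stein)
  then show ?thesis
    by (simp add: pderiv_mult gaussian_expectation_add mult.commute)
qed

lemma gaussian_expectation_hermite_poly_sq:
  "gaussian_expectation (hermite_poly n * hermite_poly n) = fact n"
proof (induction n)
  case (Suc n)
  then show ?case
    by (simp add: gaussian_expectation_mult_hermite_poly_Suc pderiv_hermite_poly gaussian_expectation_smult)
qed (simp add: gaussian_expectation_def)

lemma nn_integral_std_normal_hermite_sq:
  "(\<integral>\<^sup>+x. ennreal (std_normal_density x * (hermite d x)\<^sup>2) \<partial>lborel) = 1"
proof -
  have sq: "std_normal_density x * (hermite d x)\<^sup>2
      = std_normal_density x * poly (hermite_poly d * hermite_poly d) x / fact d" for x
    by (simp add: hermite_def poly_hermite_poly power2_eq_square)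
  have "integrable lborel (\<lambda>x. std_normal_density x * (hermite d x)\<^sup>2)"
    unfolding sq by (intro integrable_divide_zero integrable_std_normal_poly)
  moreover have "(\<integral>x. std_normal_density x * (hermite d x)\<^sup>2 \<partial>lborel) = 1"
    using gaussian_expectation_hermite_poly_sq[of d]
    unfolding sq gaussian_expectation_def by simp
  ultimately show ?thesis
    by (simp add: nn_integral_eq_integral)
qed

lemma nn_integral_lborel_swap:
  fixes w f :: "real \<Rightarrow> ennreal" and R :: "(real \<times> real) set"
  assumes [measurable]: "w \<in> borel_measurable borel" "f \<in> borel_measurable borel"
    "Measurable.pred (borel \<Otimes>\<^sub>M borel) (\<lambda>p. p \<in> R)"
  shows "(\<integral>\<^sup>+x. w x * (\<integral>\<^sup>+t. f t * indicator R (x, t) \<partial>lborel) \<partial>lborel)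
       = (\<integral>\<^sup>+t. f t * (\<integral>\<^sup>+x. w x * indicator R (x, t) \<partial>lborel) \<partial>lborel)"
proof -
  have [measurable]: "R \<in> sets (borel \<Otimes>\<^sub>M borel)"
    using assms(3) by (simp add: pred_def space_pair_measure)
  have "(\<integral>\<^sup>+x. w x * (\<integral>\<^sup>+t. f t * indicator R (x, t) \<partial>lborel) \<partial>lborel)
      = (\<integral>\<^sup>+x. \<integral>\<^sup>+t. w x * f t * indicator R (x, t) \<partial>lborel \<partial>lborel)"
    by (simp add: nn_integral_cmult mult.assoc)
  also have "\<dots> = (\<integral>\<^sup>+t. \<integral>\<^sup>+x. w x * f t * indicator R (x, t) \<partial>lborel \<partial>lborel)"
    by (rule lborel_pair.Fubini') measurable
  also have "\<dots> = (\<integral>\<^sup>+t. f t * (\<integral>\<^sup>+x. w x * indicator R (x, t) \<partial>lborel) \<partial>lborel)"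
    by (simp add: nn_integral_cmult ac_simps)
  finally show ?thesis .
qed

lemma std_normal_density_le_exp: "std_normal_density x \<le> exp (- x\<^sup>2 / 2)"
proof -
  have "1 / sqrt (2 * pi) \<le> 1"
    using pi_gt3 by simp
  then show ?thesis
    unfolding std_normal_density_def by (intro mult_left_le_one_le) simp_all
qed

lemma std_normal_density_le_1: "std_normal_density x \<le> 1"
  using std_normal_density_le_exp[of x] by (rule order_trans) simp

lemma nn_integral_std_normal_first_moment_tail:
  assumes "0 \<le> a"
  shows "(\<integral>\<^sup>+x. ennreal (x * std_normal_density x) * indicator {a..} x \<partial>lborel)
       = ennreal (std_normal_density a)"
proof -
  have "((\<lambda>x. - std_normal_density x) has_real_derivative x * std_normal_density x) (at x)" for x
    unfolding std_normal_density_def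
    by (auto intro!: derivative_eq_intros simp: field_simps power2_eq_square)
  moreover have "((\<lambda>x. - std_normal_density x) \<longlongrightarrow> 0) at_top"
    unfolding std_normal_density_def by real_asymp
  ultimately show ?thesis
    using nn_integral_FTC_atLeast[where F = "\<lambda>x. - std_normal_density x" and T = 0 and a = a]
    using assms by auto
qed

text \<open>Mills' inequality: on \<open>(t, \<infinity>)\<close> the density is at most \<open>x \<phi>(x) / t\<close>.\<close>
lemma nn_integral_std_normal_tail_le:
  assumes "0 < t"
  shows "(\<integral>\<^sup>+x. ennreal (std_normal_density x) * indicator {t<..} x \<partial>lborel)
       \<le> ennreal (std_normal_density t / t)"
proof -
  have "(\<integral>\<^sup>+x. ennreal (std_normal_density x) * indicator {t<..} x \<partial>lborel)
      \<le> (\<integral>\<^sup>+x. ennreal (1 / t) * (ennreal (x * std_normal_density x) * indicator {t..} x) \<partial>lborel)"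
  proof (rule nn_integral_mono)
    fix x :: real
    have "t < x \<Longrightarrow> std_normal_density x \<le> 1 / t * (x * std_normal_density x)"
      using assms by (simp add: field_simps mult_right_mono)
    then show "ennreal (std_normal_density x) * indicator {t<..} x
        \<le> ennreal (1 / t) * (ennreal (x * std_normal_density x) * indicator {t..} x)"
      using assms by (auto simp: indicator_def ennreal_mult[symmetric] intro: ennreal_leI)
  qed
  also have "\<dots> = ennreal (std_normal_density t / t)"
    using assms by (simp add: nn_integral_cmult nn_integral_std_normal_first_moment_tail ennreal_mult[symmetric])
  finally show ?thesis .
qed

lemma nn_integral_std_normal_upper_primitive_le:
  fixes f :: "real \<Rightarrow> ennreal" and \<tau> :: real
  assumes [measurable]: "f \<in> borel_measurable borel" and "0 < \<tau>"
  shows "(\<integral>\<^sup>+x. ennreal (std_normal_density x) * (\<integral>\<^sup>+t. f t * indicator {\<tau><..<x} t \<partial>lborel) \<partial>lborel)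
       \<le> (\<integral>\<^sup>+t. f t * ennreal (std_normal_density t / t) * indicator {\<tau><..} t \<partial>lborel)"
proof -
  let ?R = "{(x, t). \<tau> < t \<and> t < x}"
  let ?inner = "\<lambda>t. \<integral>\<^sup>+x. ennreal (std_normal_density x) * indicator ?R (x, t) \<partial>lborel"
  have "(\<integral>\<^sup>+x. ennreal (std_normal_density x) * (\<integral>\<^sup>+t. f t * indicator {\<tau><..<x} t \<partial>lborel) \<partial>lborel)
      = (\<integral>\<^sup>+t. f t * ?inner t \<partial>lborel)"
    by (subst nn_integral_lborel_swap[symmetric]) (simp_all add: indicator_def)
  also have "\<dots> \<le> (\<integral>\<^sup>+t. f t * ennreal (std_normal_density t / t) * indicator {\<tau><..} t \<partial>lborel)"
  proof (rule nn_integral_mono)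
    fix t :: real
    show "f t * ?inner t \<le> f t * ennreal (std_normal_density t / t) * indicator {\<tau><..} t"
    proof (cases "\<tau> < t")
      case True
      have "?inner t = (\<integral>\<^sup>+x. ennreal (std_normal_density x) * indicator {t<..} x \<partial>lborel)"
        using True by (intro nn_integral_cong) (simp add: indicator_def)
      also have "\<dots> \<le> ennreal (std_normal_density t / t)"
        using True \<open>0 < \<tau>\<close> by (intro nn_integral_std_normal_tail_le) simp
      finally show ?thesis
        using True by (simp add: mult_left_mono)
    qed (simp add: indicator_def)
  qed
  finally show ?thesis .
qed

lemma nn_integral_std_normal_lower_primitive_le:
  fixes f :: "real \<Rightarrow> ennreal" and \<tau> :: real
  assumes [measurable]: "f \<in> borel_measurable borel"
  shows "(\<integral>\<^sup>+x. ennreal (std_normal_density x) * indicator {0<..} x *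
            (\<integral>\<^sup>+t. f t * indicator {x<..<\<tau>} t \<partial>lborel) \<partial>lborel)
       \<le> (\<integral>\<^sup>+t. f t * ennreal t * indicator {0<..<\<tau>} t \<partial>lborel)"
proof -
  let ?R = "{(x, t). x < t \<and> t < \<tau>}"
  let ?inner = "\<lambda>t. \<integral>\<^sup>+x. ennreal (std_normal_density x) * indicator {0<..} x * indicator ?R (x, t) \<partial>lborel"
  have "(\<integral>\<^sup>+x. ennreal (std_normal_density x) * indicator {0<..} x *
            (\<integral>\<^sup>+t. f t * indicator {x<..<\<tau>} t \<partial>lborel) \<partial>lborel)
      = (\<integral>\<^sup>+t. f t * ?inner t \<partial>lborel)"
    by (subst nn_integral_lborel_swap[symmetric]) (simp_all add: indicator_def)
  also have "\<dots> \<le> (\<integral>\<^sup>+t. f t * ennreal t * indicator {0<..<\<tau>} t \<partial>lborel)"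
  proof (rule nn_integral_mono)
    fix t :: real
    show "f t * ?inner t \<le> f t * ennreal t * indicator {0<..<\<tau>} t"
    proof (cases "0 < t \<and> t < \<tau>")
      case True
      have "?inner t \<le> (\<integral>\<^sup>+x. indicator {0<..<t} x \<partial>lborel)"
        by (intro nn_integral_mono) (auto simp: indicator_def std_normal_density_le_1)
      then show ?thesis
        using True by (simp add: mult_left_mono)
    next
      case False
      then have "?inner t = 0"
        by (auto simp: indicator_def intro!: nn_integral_zero')
      then show ?thesis
        by simp
    qed
  qed
  finally show ?thesis .
qed

lemma abs_div_sq_le_weighted_amgm:
  fixes h p t l :: real
  assumes "0 \<le> p" "1 \<le> t" "0 < l"
  shows "\<bar>h\<bar> / t * (p / t) \<le> l / 2 * (p * h\<^sup>2) + 1 / (2 * l) * (t * p)"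
proof -
  have "0 \<le> p / (2 * l) * (l * \<bar>h\<bar> - 1 / t\<^sup>2)\<^sup>2"
    using assms by simp
  also have "\<dots> = l / 2 * (p * h\<^sup>2) + 1 / (2 * l) * (p / t ^ 4) - \<bar>h\<bar> / t * (p / t)"
    using assms by (simp add: field_simps power2_eq_square eval_nat_numeral)
  finally have "\<bar>h\<bar> / t * (p / t) \<le> l / 2 * (p * h\<^sup>2) + 1 / (2 * l) * (p / t ^ 4)"
    by simp
  moreover have "p / t ^ 4 \<le> t * p"
  proof -
    have "p / t ^ 4 \<le> p"
      using assms by (simp add: divide_le_eq mult_le_cancel_left1 mult_left_mono)
    also have "p \<le> t * p"
      using assms mult_right_mono[of 1 t p] by simp
    finally show ?thesis .
  qed
  then have "1 / (2 * l) * (p / t ^ 4) \<le> 1 / (2 * l) * (t * p)"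
    using assms by (intro mult_left_mono) auto
  ultimately show ?thesis
    by linarith
qed

lemma ennreal_mult_add_mult:
  fixes a b x y :: real
  assumes "0 \<le> a" "0 \<le> b" "0 \<le> x" "0 \<le> y"
  shows "ennreal (a * x + b * y) = ennreal a * ennreal x + ennreal b * ennreal y"
  using assms by (simp add: ennreal_plus ennreal_mult)

lemma nn_integral_abs_div_sq_std_normal_le:
  fixes g :: "real \<Rightarrow> real" and \<tau> :: real
  assumes [measurable]: "g \<in> borel_measurable borel"
    and g_sq: "(\<integral>\<^sup>+t. ennreal (std_normal_density t * (g t)\<^sup>2) \<partial>lborel) \<le> 1"
    and "1 \<le> \<tau>"
  shows "(\<integral>\<^sup>+t. ennreal (\<bar>g t\<bar> / t) * ennreal (std_normal_density t / t) * indicator {\<tau><..} t \<partial>lborel)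
       \<le> ennreal (exp (- \<tau>\<^sup>2 / 4))"
proof -
  define l where "l = exp (- \<tau>\<^sup>2 / 4)"
  have l: "0 < l"
    unfolding l_def by simp
  have "(\<integral>\<^sup>+t. ennreal (\<bar>g t\<bar> / t) * ennreal (std_normal_density t / t) * indicator {\<tau><..} t \<partial>lborel)
      \<le> (\<integral>\<^sup>+t. ennreal (l / 2) * ennreal (std_normal_density t * (g t)\<^sup>2) +
          ennreal (1 / (2 * l)) * (ennreal (t * std_normal_density t) * indicator {\<tau>..} t) \<partial>lborel)"
  proof (rule nn_integral_mono)
    fix t :: real
    show "ennreal (\<bar>g t\<bar> / t) * ennreal (std_normal_density t / t) * indicator {\<tau><..} t
        \<le> ennreal (l / 2) * ennreal (std_normal_density t * (g t)\<^sup>2) +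
          ennreal (1 / (2 * l)) * (ennreal (t * std_normal_density t) * indicator {\<tau>..} t)"
    proof (cases "\<tau> < t")
      case True
      then have "1 \<le> t"
        using assms by simp
      have "ennreal (\<bar>g t\<bar> / t) * ennreal (std_normal_density t / t)
          = ennreal (\<bar>g t\<bar> / t * (std_normal_density t / t))"
        using \<open>1 \<le> t\<close> by (subst ennreal_mult) auto
      also have "\<dots> \<le> ennreal (l / 2 * (std_normal_density t * (g t)\<^sup>2) + 1 / (2 * l) * (t * std_normal_density t))"
        using l \<open>1 \<le> t\<close> by (intro ennreal_leI abs_div_sq_le_weighted_amgm) auto
      also have "\<dots> = ennreal (l / 2) * ennreal (std_normal_density t * (g t)\<^sup>2) +
          ennreal (1 / (2 * l)) * ennreal (t * std_normal_density t)"
        using l \<open>1 \<le> t\<close> by (intro ennreal_mult_add_mult) auto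
      finally show ?thesis
        using True by simp
    qed simp
  qed
  also have "\<dots> = ennreal (l / 2) * (\<integral>\<^sup>+t. ennreal (std_normal_density t * (g t)\<^sup>2) \<partial>lborel) +
      ennreal (1 / (2 * l)) * ennreal (std_normal_density \<tau>)"
    using assms by (simp add: nn_integral_add nn_integral_cmult nn_integral_std_normal_first_moment_tail)
  also have "\<dots> \<le> ennreal (l / 2) * 1 + ennreal (1 / (2 * l)) * ennreal (std_normal_density \<tau>)"
    using g_sq by (intro add_right_mono mult_left_mono) simp_all
  also have "\<dots> = ennreal (l / 2 * 1 + 1 / (2 * l) * std_normal_density \<tau>)"
    using l by (subst ennreal_mult_add_mult) auto
  also have "\<dots> \<le> ennreal l"
  proof (intro ennreal_leI)
    have "std_normal_density \<tau> \<le> l * l"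
      using std_normal_density_le_exp[of \<tau>] unfolding l_def by (simp flip: exp_add)
    then have "1 / (2 * l) * std_normal_density \<tau> \<le> l / 2"
      using l by (simp add: field_simps)
    then show "l / 2 * 1 + 1 / (2 * l) * std_normal_density \<tau> \<le> l"
      by simp
  qed
  finally show ?thesis
    unfolding l_def .
qed

lemma nn_integral_std_normal_lower_finite:
  fixes g :: "real \<Rightarrow> real" and \<tau> :: real
  assumes "continuous_on UNIV g"
  shows "(\<integral>\<^sup>+x. ennreal (std_normal_density x) * indicator {0<..} x *
            (\<integral>\<^sup>+t. ennreal (\<bar>g t\<bar> / t) * indicator {x<..<\<tau>} t \<partial>lborel) \<partial>lborel) < \<infinity>"
proof -
  have [measurable]: "g \<in> borel_measurable borel"
    using assms by (rule borel_measurable_continuous_onI)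
  have "(\<integral>\<^sup>+x. ennreal (std_normal_density x) * indicator {0<..} x *
            (\<integral>\<^sup>+t. ennreal (\<bar>g t\<bar> / t) * indicator {x<..<\<tau>} t \<partial>lborel) \<partial>lborel)
      \<le> (\<integral>\<^sup>+t. ennreal (\<bar>g t\<bar> / t) * ennreal t * indicator {0<..<\<tau>} t \<partial>lborel)"
    by (rule nn_integral_std_normal_lower_primitive_le) measurable
  also have "\<dots> \<le> (\<integral>\<^sup>+t. ennreal (indicator {0..\<tau>} t * \<bar>g t\<bar>) \<partial>lborel)"
    by (intro nn_integral_mono) (simp add: indicator_def ennreal_mult[symmetric])
  also have "\<dots> < \<infinity>"
  proof -
    have "integrable lborel (\<lambda>t. indicator {0..\<tau>} t *\<^sub>R \<bar>g t\<bar>)"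
      using assms by (intro borel_integrable_compact) (auto intro: continuous_on_subset continuous_intros)
    then show ?thesis
      by (simp add: integrable_iff_bounded abs_mult)
  qed
  finally show ?thesis .
qed

lemma interval_lebesgue_integral_eq_enn2real_diff:
  fixes f :: "real \<Rightarrow> real"
  assumes [measurable]: "f \<in> borel_measurable borel"
    and nonneg: "\<And>t. 0 < t \<Longrightarrow> 0 \<le> f t" and "0 < a" "0 < b"
  shows "(LBINT t=ereal a..ereal b. f t)
       = enn2real (\<integral>\<^sup>+t. ennreal (f t) * indicator {a<..<b} t \<partial>lborel)
         - enn2real (\<integral>\<^sup>+t. ennreal (f t) * indicator {b<..<a} t \<partial>lborel)"
proof -
  have set_integral: "(LINT t:{c<..<d}|lborel. f t) = enn2real (\<integral>\<^sup>+t. ennreal (f t) * indicator {c<..<d} t \<partial>lborel)"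
    if "0 < c" for c d
    unfolding set_lebesgue_integral_def using that nonneg
    by (subst integral_eq_nn_integral) (auto simp: indicator_def intro!: arg_cong[where f = enn2real] nn_integral_cong)
  show ?thesis
    using assms by (simp add: interval_lebesgue_integral_def set_integral)
qed

lemma ennreal_mult_enn2real_le: "0 \<le> a \<Longrightarrow> ennreal (a * enn2real r) \<le> ennreal a * r"
  by (simp add: ennreal_mult ennreal_enn2real_if mult_left_mono)

lemma integrable_mult_enn2real:
  fixes w :: "real \<Rightarrow> real" and N :: "real \<Rightarrow> ennreal"
  assumes [measurable]: "w \<in> borel_measurable borel" "N \<in> borel_measurable borel"
    and "\<And>x. 0 \<le> w x" and "(\<integral>\<^sup>+x. ennreal (w x) * N x \<partial>lborel) < \<infinity>"
  shows "integrable lborel (\<lambda>x. w x * enn2real (N x))"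
proof (rule integrableI_nonneg)
  have "(\<integral>\<^sup>+x. ennreal (w x * enn2real (N x)) \<partial>lborel) \<le> (\<integral>\<^sup>+x. ennreal (w x) * N x \<partial>lborel)"
    using assms(3) by (intro nn_integral_mono ennreal_mult_enn2real_le)
  then show "(\<integral>\<^sup>+x. ennreal (w x * enn2real (N x)) \<partial>lborel) < \<infinity>"
    using assms(4) by (rule le_less_trans)
qed (use assms(3) in simp_all)

lemma integrable_mult_enn2real_diff_le:
  fixes w :: "real \<Rightarrow> real" and P Q :: "real \<Rightarrow> ennreal"
  assumes [measurable]: "w \<in> borel_measurable borel" "P \<in> borel_measurable borel" "Q \<in> borel_measurable borel"
    and w_nonneg: "\<And>x. 0 \<le> w x" and "0 \<le> c"
    and P: "(\<integral>\<^sup>+x. ennreal (w x) * P x \<partial>lborel) \<le> ennreal c"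
    and Q: "(\<integral>\<^sup>+x. ennreal (w x) * Q x \<partial>lborel) < \<infinity>"
  shows "integrable lborel (\<lambda>x. w x * enn2real (P x) - w x * enn2real (Q x))
       \<and> (\<integral>x. w x * enn2real (P x) - w x * enn2real (Q x) \<partial>lborel) \<le> c"
proof -
  have "(\<integral>\<^sup>+x. ennreal (w x) * P x \<partial>lborel) < \<infinity>"
    using P by (rule le_less_trans) simp
  then have int_P: "integrable lborel (\<lambda>x. w x * enn2real (P x))"
    using w_nonneg by (intro integrable_mult_enn2real) auto
  have int_Q: "integrable lborel (\<lambda>x. w x * enn2real (Q x))"
    using Q w_nonneg by (intro integrable_mult_enn2real) auto
  have "(\<integral>\<^sup>+x. ennreal (w x * enn2real (P x)) \<partial>lborel) \<le> (\<integral>\<^sup>+x. ennreal (w x) * P x \<partial>lborel)"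
    using w_nonneg by (intro nn_integral_mono ennreal_mult_enn2real_le)
  then have "(\<integral>x. w x * enn2real (P x) \<partial>lborel) \<le> c"
    using P \<open>0 \<le> c\<close> by (intro integral_real_bounded) auto
  moreover have "0 \<le> (\<integral>x. w x * enn2real (Q x) \<partial>lborel)"
    using w_nonneg by (intro integral_nonneg_AE) simp
  ultimately show ?thesis
    using int_P int_Q by simp
qed

theorem std_normal_integral_primitive_le:
  fixes g :: "real \<Rightarrow> real" and \<tau> :: real
  assumes cont: "continuous_on UNIV g"
    and g_sq: "(\<integral>\<^sup>+t. ennreal (std_normal_density t * (g t)\<^sup>2) \<partial>lborel) \<le> 1"
    and "1 \<le> \<tau>"
  shows "interval_lebesgue_integrable lborel (ereal 0) PInfty
           (\<lambda>x. (LBINT t=ereal \<tau>..ereal x. \<bar>g t\<bar> / t) * std_normal_density x)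
       \<and> (LBINT x=ereal 0..PInfty. (LBINT t=ereal \<tau>..ereal x. \<bar>g t\<bar> / t) * std_normal_density x)
           \<le> exp (- \<tau>\<^sup>2 / 4)"
proof -
  have [measurable]: "g \<in> borel_measurable borel"
    using cont by (rule borel_measurable_continuous_onI)
  define P where "P x = (\<integral>\<^sup>+t. ennreal (\<bar>g t\<bar> / t) * indicator {\<tau><..<x} t \<partial>lborel)" for x
  define Q where "Q x = (\<integral>\<^sup>+t. ennreal (\<bar>g t\<bar> / t) * indicator {x<..<\<tau>} t \<partial>lborel)" for x
  define w where "w x = std_normal_density x * indicator {0<..} x" for x
  have [measurable]: "P \<in> borel_measurable borel"
    unfolding P_def indicator_def greaterThanLessThan_iff by measurable
  have [measurable]: "Q \<in> borel_measurable borel"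
    unfolding Q_def indicator_def greaterThanLessThan_iff by measurable
  have [measurable]: "w \<in> borel_measurable borel"
    unfolding w_def by measurable
  have w_nonneg: "0 \<le> w x" for x
    by (simp add: w_def)
  have w_ennreal: "ennreal (w x) = ennreal (std_normal_density x) * indicator {0<..} x" for x
    by (simp add: w_def indicator_def)
  have split: "indicator {0<..} x * ((LBINT t=ereal \<tau>..ereal x. \<bar>g t\<bar> / t) * std_normal_density x)
      = w x * enn2real (P x) - w x * enn2real (Q x)" for x
  proof (cases "0 < x")
    case True
    have primitive: "(LBINT t=ereal \<tau>..ereal x. \<bar>g t\<bar> / t) = enn2real (P x) - enn2real (Q x)"
      unfolding P_def Q_def using True \<open>1 \<le> \<tau>\<close>
      by (intro interval_lebesgue_integral_eq_enn2real_diff) auto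
    show ?thesis
      using True by (simp add: primitive w_def) (simp add: algebra_simps)
  qed (simp add: w_def)
  have upper: "(\<integral>\<^sup>+x. ennreal (w x) * P x \<partial>lborel) \<le> ennreal (exp (- \<tau>\<^sup>2 / 4))"
  proof -
    have "(\<integral>\<^sup>+x. ennreal (w x) * P x \<partial>lborel) \<le> (\<integral>\<^sup>+x. ennreal (std_normal_density x) * P x \<partial>lborel)"
      unfolding w_ennreal by (intro nn_integral_mono mult_right_mono) (simp_all add: indicator_def)
    also have "\<dots> \<le> (\<integral>\<^sup>+t. ennreal (\<bar>g t\<bar> / t) * ennreal (std_normal_density t / t) * indicator {\<tau><..} t \<partial>lborel)"
      unfolding P_def using \<open>1 \<le> \<tau>\<close> by (intro nn_integral_std_normal_upper_primitive_le) auto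
    also have "\<dots> \<le> ennreal (exp (- \<tau>\<^sup>2 / 4))"
      using g_sq \<open>1 \<le> \<tau>\<close> by (intro nn_integral_abs_div_sq_std_normal_le) auto
    finally show ?thesis .
  qed
  have lower: "(\<integral>\<^sup>+x. ennreal (w x) * Q x \<partial>lborel) < \<infinity>"
    using nn_integral_std_normal_lower_finite[OF cont, of \<tau>] unfolding w_ennreal Q_def .
  show ?thesis
    using integrable_mult_enn2real_diff_le[OF _ _ _ w_nonneg _ upper lower]
    unfolding interval_lebesgue_integrable_def[of lborel "ereal 0" PInfty]
      interval_lebesgue_integral_def[of lborel "ereal 0" PInfty] set_integrable_def set_lebesgue_integral_def
    by (simp add: split)
qed

lemma continuous_on_hermite: "continuous_on S (hermite d)"
proof -
  have "hermite d = (\<lambda>x. poly (hermite_poly d) x / sqrt (fact d))"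
    by (simp add: fun_eq_iff hermite_def poly_hermite_poly)
  then show ?thesis
    by (auto intro!: continuous_intros)
qed

theorem lemmaA11:
  fixes d :: nat and \<tau> :: real
  assumes "\<tau> \<ge> 1"
  shows "interval_lebesgue_integrable lborel (ereal 0) PInfty
           (\<lambda>x. (LBINT t=ereal \<tau>..ereal x. \<bar>hermite d t\<bar> / t) * std_normal_density x)
       \<and> (LBINT x=ereal 0..PInfty. (LBINT t=ereal \<tau>..ereal x. \<bar>hermite d t\<bar> / t) * std_normal_density x)
           \<le> exp (- (\<tau>\<^sup>2) / 4)"
  using continuous_on_hermite nn_integral_std_normal_hermite_sq[of d] assms
  by (intro std_normal_integral_primitive_le) simp_all

end
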